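(* Let $\alpha_i,\beta_i,\gamma_i$ ($i=1,2,3$) be real numbers such that $$\operatorname{Rank}\begin{pmatrix}\alpha_1&\beta_1&\gamma_1&0&0&0\\ \alpha_2&\beta_2&\gamma_2&0&0&0\\ 0&0&0&\alpha_3&\beta_3&\gamma_3\end{pmatrix}=3,$$ and let $B_1[u]=\alpha_1u(0)+\beta_1u'(0)+\gamma_1u''(0)$, $B_2[u]=\alpha_2u(0)+\beta_2u'(0)+\gamma_2u''(0)$, $B_3[u]=\alpha_3u(1)+\beta_3u'(1)+\gamma_3u''(1)$. Assume the problem $u'''=\varphi$ on $(0,1)$, $B_1[u]=B_2[u]=B_3[u]=0$ has a Green function $G(t,s)$, and set $G_1=\partial G/\partial t$, $G_2=\partial^2 G/\partial t^2$, $$M_0=\max_{0\le t\le1}\int_0^1|G(t,s)|ds,\quad M_1=\max_{0\le t\le1}\int_0^1|G_1(t,s)|ds,\quad M_2=\max_{0\le t\le1}\int_0^1|G_2(t,s)|ds.$$ For $M>0$ let $\mathcal{D}_M=\{(t,x,y,z): 0\le t\le1,\ |x|\le M_0M,\ |y|\le M_1M,\ |z|\le M_2M\}$. Suppose there exists $M>0$ such that the function $f(t,x,y,z)$ is continuous in $\mathcal{D}_M$ and $|f(t,x,y,z)|\le M$ for all $(t,x,y,z)\in\mathcal{D}_M$. Then the problem $$u'''(t)=f(t,u(t),u'(t),u''(t)),\ 0<t<1,\qquad B_1[u]=B_2[u]=B_3[u]=0$$ has a solution $u$ satisfying $|u(t)|\le M_0M$, $|u'(t)|\le M_1M$, $|u''(t)|\le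 M_2M$ for all $0\le t\le 1$.
   Context: The Green function $G(t,s)$ of the linear problem $u'''=\varphi$, $B_1[u]=B_2[u]=B_3[u]=0$ is the function on $[0,1]^2$ such that for every $\varphi\in C[0,1]$ the unique solution of this linear problem is $u(t)=\int_0^1G(t,s)\varphi(s)\,ds$; then $u'(t)=\int_0^1G_1(t,s)\varphi(s)ds$, $u''(t)=\int_0^1G_2(t,s)\varphi(s)ds$, where $G_1$ is continuous on $[0,1]^2$ and $G_2$ is continuous on $[0,1]^2$ except on the line $t=s$. *)

theory Defs
  imports "HOL-Analysis.Analysis"
begin

text \<open>Rows of the 3x6 boundary coefficient matrix. Column indices of type 6 are 0,...,5.\<close>
definition rowL :: "real \<Rightarrow> real \<Rightarrow> real \<Rightarrow> 6 \<Rightarrow> real" where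
  "rowL a b c j = (if j = 0 then a else if j = 1 then b else if j = 2 then c else 0)"

definition rowR :: "real \<Rightarrow> real \<Rightarrow> real \<Rightarrow> 6 \<Rightarrow> real" where
  "rowR a b c j = (if j = 3 then a else if j = 4 then b else if j = 5 then c else 0)"

definition bc_matrix ::
  "real \<Rightarrow> real \<Rightarrow> real \<Rightarrow> real \<Rightarrow> real \<Rightarrow> real \<Rightarrow> real \<Rightarrow> real \<Rightarrow> real \<Rightarrow> real^6^3" where
  "bc_matrix a1 b1 c1 a2 b2 c2 a3 b3 c3 =
     (\<chi> i j. if i = 0 then rowL a1 b1 c1 j
             else if i = 1 then rowL a2 b2 c2 j
             else rowR a3 b3 c3 j)"

definition bvp_sol ::
  "real \<Rightarrow> real \<Rightarrow> real \<Rightarrow> real \<Rightarrow> real \<Rightarrow> real \<Rightarrow> real \<Rightarrow> real \<Rightarrow> real \<Rightarrow>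
   (real \<Rightarrow> real) \<Rightarrow> (real \<Rightarrow> real) \<Rightarrow> (real \<Rightarrow> real) \<Rightarrow> (real \<Rightarrow> real) \<Rightarrow> bool" where
  "bvp_sol a1 b1 c1 a2 b2 c2 a3 b3 c3 h u u1 u2 \<longleftrightarrow>
     (\<forall>t\<in>{0..1}. (u has_real_derivative u1 t) (at t within {0..1})) \<and>
     (\<forall>t\<in>{0..1}. (u1 has_real_derivative u2 t) (at t within {0..1})) \<and>
     continuous_on {0..1} u2 \<and>
     (\<forall>t\<in>{0<..<1}. (u2 has_real_derivative h t) (at t)) \<and>
     a1 * u 0 + b1 * u1 0 + c1 * u2 0 = 0 \<and>
     a2 * u 0 + b2 * u1 0 + c2 * u2 0 = 0 \<and>
     a3 * u 1 + b3 * u1 1 + c3 * u2 1 = 0"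

definition green_function ::
  "real \<Rightarrow> real \<Rightarrow> real \<Rightarrow> real \<Rightarrow> real \<Rightarrow> real \<Rightarrow> real \<Rightarrow> real \<Rightarrow> real \<Rightarrow>
   (real \<Rightarrow> real \<Rightarrow> real) \<Rightarrow> (real \<Rightarrow> real \<Rightarrow> real) \<Rightarrow> (real \<Rightarrow> real \<Rightarrow> real) \<Rightarrow> bool" where
  "green_function a1 b1 c1 a2 b2 c2 a3 b3 c3 G G1 G2 \<longleftrightarrow>
     continuous_on ({0..1} \<times> {0..1}) (\<lambda>(t,s). G t s) \<and>
     continuous_on ({0..1} \<times> {0..1}) (\<lambda>(t,s). G1 t s) \<and>
     continuous_on ({0..1} \<times> {0..1} - {p. fst p = snd p}) (\<lambda>(t,s). G2 t s) \<and>
     (\<forall>s\<in>{0..1}. \<forall>t\<in>{0..1}. ((\<lambda>t. G t s) has_real_derivative G1 t s) (at t within {0..1})) \<and>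
     (\<forall>s\<in>{0..1}. \<forall>t\<in>{0..1}. t \<noteq> s \<longrightarrow>
        ((\<lambda>t. G1 t s) has_real_derivative G2 t s) (at t within {0..1})) \<and>
     (\<forall>\<phi>. continuous_on {0..1} \<phi> \<longrightarrow>
        bvp_sol a1 b1 c1 a2 b2 c2 a3 b3 c3 \<phi>
          (\<lambda>t. integral {0..1} (\<lambda>s. G t s * \<phi> s))
          (\<lambda>t. integral {0..1} (\<lambda>s. G1 t s * \<phi> s))
          (\<lambda>t. integral {0..1} (\<lambda>s. G2 t s * \<phi> s)) \<and>
        (\<forall>u u1 u2. bvp_sol a1 b1 c1 a2 b2 c2 a3 b3 c3 \<phi> u u1 u2 \<longrightarrow>
           (\<forall>t\<in>{0..1}. u t = integral {0..1} (\<lambda>s. G t s * \<phi> s))))"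

end

theory Submission
  imports Defs "HOL-Homology.Homology" "HOL-Complex_Analysis.Great_Picard"
begin

(* Writing u = \<integral> G \<phi>, u' = \<integral> G1 \<phi>, u'' = \<integral> G2 \<phi>, the boundary value problem becomes the
   fixed point problem \<phi> = f(t, \<integral> G \<phi>, \<integral> G1 \<phi>, \<integral> G2 \<phi>) for \<phi> = u''' in the ball
   |\<phi>| \<le> M of C[0, 1]. By the choice of M0, M1, M2 this map sends the ball into itself, and
   its values are equicontinuous because the three inner integrals are uniformly Lipschitz (their
   derivatives are the next integral, resp. \<phi>). Schauder's theorem, obtained from Brouwer's
   theorem by piecewise linear discretisation and the Arzela-Ascoli theorem, gives the fixed point.
   The hypotheses say little about G2 itself. Comparing with the explicit solution
   \<integral> (t - s)\<^sub>+\<^sup>2/2 \<phi>(s) ds shows that G(t, s) is (t - s)\<^sub>+\<^sup>2/2 plus a quadratic in t, so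
   G2(t, s) is a unit jump across the diagonal plus a continuous function of s. *)

section \<open>Brouwer's fixed point theorem in \<open>\<real>\<^sup>n\<^sup>+\<^sup>1\<close>\<close>

definition nball :: "nat \<Rightarrow> (nat \<Rightarrow> real) set" where
  "nball n = {x. (\<Sum>i\<le>n. (x i)\<^sup>2) \<le> 1 \<and> (\<forall>i>n. x i = 0)}"

definition nnormalize :: "nat \<Rightarrow> (nat \<Rightarrow> real) \<Rightarrow> nat \<Rightarrow> real" where
  "nnormalize n y = (\<lambda>i. y i / sqrt (\<Sum>k\<le>n. (y k)\<^sup>2))"

lemma topspace_nsphere_subset_nball: "topspace (nsphere n) \<subseteq> nball n"
  by (auto simp: nsphere nball_def)

lemma nnormalize_in_nsphere:
  assumes "\<forall>i>n. y i = 0" and "(\<Sum>i\<le>n. (y i)\<^sup>2) \<noteq> 0"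
  shows "nnormalize n y \<in> topspace (nsphere n)"
proof -
  let ?S = "\<Sum>k\<le>n. (y k)\<^sup>2"
  have "?S > 0"
    using assms(2) by (metis less_eq_real_def sum_nonneg zero_le_power2)
  then have "(\<Sum>i\<le>n. (y i / sqrt ?S)\<^sup>2) = 1"
    by (simp add: power_divide flip: sum_divide_distrib)
  then show ?thesis
    using assms(1) by (simp add: nsphere nnormalize_def)
qed

lemma continuous_map_nnormalize:
  assumes cont: "continuous_map X (powertop_real UNIV) d"
    and vanish: "\<And>p i. p \<in> topspace X \<Longrightarrow> i > n \<Longrightarrow> d p i = 0"
    and nonzero: "\<And>p. p \<in> topspace X \<Longrightarrow> (\<Sum>i\<le>n. (d p i)\<^sup>2) \<noteq> 0"
  shows "continuous_map X (nsphere n) (\<lambda>p. nnormalize n (d p))"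
proof -
  have "continuous_map X euclideanreal (\<lambda>p. d p i)" for i
    using cont by (simp add: continuous_map_componentwise_UNIV)
  then have "continuous_map X (powertop_real UNIV) (\<lambda>p. nnormalize n (d p))"
    unfolding continuous_map_componentwise_UNIV nnormalize_def
    by (intro allI continuous_intros) (use nonzero in auto)
  moreover have "nnormalize n (d p) \<in> topspace (nsphere n)" if "p \<in> topspace X" for p
    using that vanish nonzero by (simp add: nnormalize_in_nsphere)
  ultimately show ?thesis
    by (simp add: nsphere continuous_map_in_subtopology Pi_iff)
qed

text \<open>\<open>\<real>\<^sup>n\<^sup>+\<^sup>1\<close> sits in \<^typ>\<open>nat \<Rightarrow> real\<close> as in \<^const>\<open>nsphere\<close>. A fixed point free
  self-map \<open>g\<close> of the ball would make the identity of the sphere homotopic, through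
  \<open>x - s g x\<close> normalised and then through \<open>(1 - s) x - g ((1 - s) x)\<close> normalised, to a constant
  map; but spheres are not contractible.\<close>

context
  fixes n :: nat and g :: "(nat \<Rightarrow> real) \<Rightarrow> nat \<Rightarrow> real"
  assumes cont: "continuous_map (subtopology (powertop_real UNIV) (nball n)) (powertop_real UNIV) g"
    and maps: "g \<in> nball n \<rightarrow> nball n"
    and no_fixpoint: "\<And>x. x \<in> nball n \<Longrightarrow> g x \<noteq> x"
begin

lemma fixpoint_free_vanish: "x \<in> nball n \<Longrightarrow> i > n \<Longrightarrow> g x i = 0"
  using maps by (auto simp: nball_def)

lemma fixpoint_free_sum_sq_nonzero:
  assumes x: "x \<in> nball n" and s: "s \<in> {0..1}" and on_sphere: "(\<Sum>i\<le>n. (x i)\<^sup>2) = 1 \<or> s = 1"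
  shows "(\<Sum>i\<le>n. (x i - s * g x i)\<^sup>2) \<noteq> 0"
proof
  assume "(\<Sum>i\<le>n. (x i - s * g x i)\<^sup>2) = 0"
  then have eq: "x i = s * g x i" if "i \<le> n" for i
    using that by (subst (asm) sum_nonneg_eq_0_iff) auto
  have gx: "g x \<in> nball n"
    using maps x by auto
  show False
  proof (cases "s = 1")
    case True
    have "g x = x"
    proof
      fix i show "g x i = x i"
        using eq[of i] True x gx by (cases "i \<le> n") (auto simp: nball_def)
    qed
    then show False
      using no_fixpoint x by auto
  next
    case False
    have "(\<Sum>i\<le>n. (x i)\<^sup>2) = s\<^sup>2 * (\<Sum>i\<le>n. (g x i)\<^sup>2)"
      by (simp add: eq power_mult_distrib sum_distrib_left)
    also have "\<dots> \<le> s\<^sup>2"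
      using gx s by (intro mult_left_le) (auto simp: nball_def)
    also have "\<dots> < 1"
      using s False by (simp add: power_less_one_iff abs_square_less_1)
    finally show False
      using on_sphere False by simp
  qed
qed

lemma continuous_map_fixpoint_free_component:
  "continuous_map (subtopology (powertop_real UNIV) (nball n)) euclideanreal (\<lambda>x. g x i)"
  using cont by (simp add: continuous_map_componentwise_UNIV)

lemma homotopic_id_nnormalize_diff:
  "homotopic_with (\<lambda>_. True) (nsphere n) (nsphere n) id (\<lambda>x. nnormalize n (\<lambda>i. x i - g x i))"
proof (subst homotopic_with, simp, intro exI conjI ballI)
  let ?X = "prod_topology (top_of_set {0..1::real}) (nsphere n)"
  have cont_x: "continuous_map ?X euclideanreal (\<lambda>p. snd p i)" for i
    using continuous_map_compose[OF continuous_map_snd continuous_map_nsphere_projection]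
    by (simp add: o_def)
  have cont_gx: "continuous_map ?X euclideanreal (\<lambda>p. g (snd p) i)" for i
    using continuous_map_compose[OF continuous_map_snd continuous_map_from_subtopology_mono[OF
          continuous_map_fixpoint_free_component topspace_nsphere_subset_nball]]
    by (simp add: o_def nsphere)
  show "continuous_map ?X (nsphere n) (\<lambda>p. nnormalize n (\<lambda>i. snd p i - fst p * g (snd p) i))"
  proof (rule continuous_map_nnormalize)
    show "continuous_map ?X (powertop_real UNIV) (\<lambda>p i. snd p i - fst p * g (snd p) i)"
      unfolding continuous_map_componentwise_UNIV
      by (intro allI continuous_intros cont_x cont_gx
          continuous_map_into_fulltopology[OF continuous_map_fst])
    fix p assume p: "p \<in> topspace ?X"
    then have x: "snd p \<in> nball n" "(\<Sum>i\<le>n. (snd p i)\<^sup>2) = 1"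
      using topspace_nsphere_subset_nball[of n] by (auto simp: nsphere)
    show "snd p i - fst p * g (snd p) i = 0" if "i > n" for i
      using x that fixpoint_free_vanish by (auto simp: nball_def)
    show "(\<Sum>i\<le>n. (snd p i - fst p * g (snd p) i)\<^sup>2) \<noteq> 0"
      using fixpoint_free_sum_sq_nonzero[OF x(1)] x(2) p by auto
  qed
next
  fix x assume "x \<in> topspace (nsphere n)"
  then show "nnormalize n (\<lambda>i. snd (0, x) i - fst (0, x) * g (snd (0, x)) i) = id x"
    by (simp add: nsphere nnormalize_def)
qed auto

lemma homotopic_nnormalize_diff_const:
  "homotopic_with (\<lambda>_. True) (nsphere n) (nsphere n)
     (\<lambda>x. nnormalize n (\<lambda>i. x i - g x i)) (\<lambda>x. nnormalize n (\<lambda>i. - g (\<lambda>_. 0) i))"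
proof -
  let ?X = "prod_topology (top_of_set {0..1::real}) (nsphere n)"
  define m where "m = (\<lambda>p::real \<times> (nat \<Rightarrow> real). \<lambda>i. (1 - fst p) * snd p i)"
  have m_nball: "m p \<in> nball n" if p_in: "p \<in> topspace ?X" for p
  proof -
    obtain s x where p: "p = (s, x)" "s \<in> {0..1}" "x \<in> topspace (nsphere n)"
      using p_in by (cases p) auto
    have "(\<Sum>i\<le>n. ((1 - s) * x i)\<^sup>2) = (1 - s)\<^sup>2"
      using p by (simp add: power_mult_distrib flip: sum_distrib_left) (simp add: nsphere)
    also have "\<dots> \<le> 1"
      using p by (simp add: power_le_one)
    finally show ?thesis
      using p by (auto simp: m_def nball_def nsphere)
  qed
  have cont_x: "continuous_map ?X euclideanreal (\<lambda>p. snd p i)" for i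
    using continuous_map_compose[OF continuous_map_snd continuous_map_nsphere_projection]
    by (simp add: o_def)
  have cont_m: "continuous_map ?X euclideanreal (\<lambda>p. m p i)" for i
    unfolding m_def
    by (intro continuous_intros cont_x continuous_map_into_fulltopology[OF continuous_map_fst])
  then have "continuous_map ?X (subtopology (powertop_real UNIV) (nball n)) m"
    using m_nball by (auto simp: continuous_map_in_subtopology continuous_map_componentwise_UNIV)
  then have cont_gm: "continuous_map ?X euclideanreal (\<lambda>p. g (m p) i)" for i
    using continuous_map_compose[OF _ continuous_map_fixpoint_free_component] by (simp add: o_def)
  have "continuous_map ?X (nsphere n) (\<lambda>p. nnormalize n (\<lambda>i. m p i - g (m p) i))"
  proof (rule continuous_map_nnormalize)
    show "continuous_map ?X (powertop_real UNIV) (\<lambda>p i. m p i - g (m p) i)"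
      unfolding continuous_map_componentwise_UNIV by (intro allI continuous_intros cont_m cont_gm)
    show "m p i - g (m p) i = 0" if "p \<in> topspace ?X" "i > n" for p i
      using m_nball[OF that(1)] that(2) fixpoint_free_vanish by (auto simp: nball_def)
    show "(\<Sum>i\<le>n. (m p i - g (m p) i)\<^sup>2) \<noteq> 0" if "p \<in> topspace ?X" for p
      using fixpoint_free_sum_sq_nonzero[OF m_nball[OF that], of 1] by simp
  qed
  then show ?thesis
    by (subst homotopic_with)
      (auto simp: m_def intro!: exI[of _ "\<lambda>p. nnormalize n (\<lambda>i. m p i - g (m p) i)"])
qed

end

lemma nball_fixpoint:
  assumes "continuous_map (subtopology (powertop_real UNIV) (nball n)) (powertop_real UNIV) g"
    and "g \<in> nball n \<rightarrow> nball n"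
  shows "\<exists>x\<in>nball n. g x = x"
proof (rule ccontr)
  assume "\<not> (\<exists>x\<in>nball n. g x = x)"
  then have "homotopic_with (\<lambda>_. True) (nsphere n) (nsphere n)
      id (\<lambda>x. nnormalize n (\<lambda>i. - g (\<lambda>_. 0) i))"
    using homotopic_with_trans[OF homotopic_id_nnormalize_diff homotopic_nnormalize_diff_const] assms
    by blast
  then show False
    using non_contractible_space_nsphere unfolding contractible_space_def by blast
qed

section \<open>Schauder's fixed point theorem in \<open>C[0, 1]\<close>\<close>

definition hat :: "nat \<Rightarrow> nat \<Rightarrow> real \<Rightarrow> real" where
  "hat n j t = max 0 (1 - \<bar>real n * t - real j\<bar>)"

definition pl_interp :: "nat \<Rightarrow> (nat \<Rightarrow> real) \<Rightarrow> real \<Rightarrow> real" where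
  "pl_interp n v t = (\<Sum>j\<le>n. v j * hat n j t)"

lemma hat_nonneg: "0 \<le> hat n j t"
  by (simp add: hat_def)

lemma continuous_on_hat [continuous_intros]: "continuous_on S (hat n j)"
  unfolding hat_def by (intro continuous_intros)

lemma continuous_on_pl_interp [continuous_intros]: "continuous_on S (pl_interp n v)"
  unfolding pl_interp_def by (intro continuous_intros)

lemma sum_tents_eq_1:
  "0 \<le> x \<Longrightarrow> x \<le> real n \<Longrightarrow> (\<Sum>j\<le>n. max 0 (1 - \<bar>x - real j\<bar>)) = 1"
proof (induction n arbitrary: x)
  case 0
  then show ?case by simp
next
  case (Suc n)
  have split: "(\<Sum>j\<le>Suc n. max 0 (1 - \<bar>x - real j\<bar>))
      = max 0 (1 - \<bar>x\<bar>) + (\<Sum>j\<le>n. max 0 (1 - \<bar>(x - 1) - real j\<bar>))"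
    by (subst sum.atMost_Suc_shift) (simp add: algebra_simps)
  show ?case
  proof (cases "x \<ge> 1")
    case True
    then show ?thesis
      using split Suc by simp
  next
    case False
    have "(\<Sum>j\<le>n. max 0 (1 - \<bar>(x - 1) - real j\<bar>)) = (\<Sum>j\<le>n. if j = 0 then x else 0)"
      using False Suc.prems by (intro sum.cong) auto
    then show ?thesis
      using split False Suc.prems by simp
  qed
qed

lemma sum_hat: "t \<in> {0..1} \<Longrightarrow> (\<Sum>j\<le>n. hat n j t) = 1"
  unfolding hat_def by (rule sum_tents_eq_1) (auto simp: mult_left_le)

lemma hat_eq_0_if_far:
  assumes "n > 0" and "\<bar>t - real j / real n\<bar> \<ge> 1 / real n"
  shows "hat n j t = 0"
proof -
  have "real n * t - real j = real n * (t - real j / real n)"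
    using assms(1) by (simp add: field_simps)
  then have "\<bar>real n * t - real j\<bar> \<ge> 1"
    using assms by (simp add: abs_mult field_simps)
  then show ?thesis
    by (simp add: hat_def)
qed

lemma pl_interp_bound:
  assumes "\<And>j. j \<le> n \<Longrightarrow> \<bar>v j\<bar> \<le> M" and "t \<in> {0..1}"
  shows "\<bar>pl_interp n v t\<bar> \<le> M"
proof -
  have "\<bar>pl_interp n v t\<bar> \<le> (\<Sum>j\<le>n. \<bar>v j\<bar> * hat n j t)"
    unfolding pl_interp_def using sum_abs[of "\<lambda>j. v j * hat n j t" "{..n}"]
    by (simp add: abs_mult hat_nonneg)
  also have "\<dots> \<le> (\<Sum>j\<le>n. M * hat n j t)"
    using assms(1) by (intro sum_mono mult_right_mono hat_nonneg) auto
  also have "\<dots> = M"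
    using sum_hat[OF assms(2)] by (simp flip: sum_distrib_left)
  finally show ?thesis .
qed

lemma pl_interp_approx:
  assumes nodes: "\<And>j. j \<le> n \<Longrightarrow> v j = \<psi> (real j / real n)" and "n > 0" and t: "t \<in> {0..1}"
    and close: "\<And>\<tau>. \<tau> \<in> {0..1} \<Longrightarrow> \<bar>\<tau> - t\<bar> < 1 / real n \<Longrightarrow> \<bar>\<psi> \<tau> - \<psi> t\<bar> \<le> e"
  shows "\<bar>pl_interp n v t - \<psi> t\<bar> \<le> e"
proof -
  have "\<bar>(v j - \<psi> t) * hat n j t\<bar> \<le> e * hat n j t" if j: "j \<le> n" for j
  proof (cases "\<bar>t - real j / real n\<bar> < 1 / real n")
    case True
    moreover have "real j / real n \<in> {0..1}"
      using j \<open>n > 0\<close> by (auto simp: field_simps)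
    ultimately show ?thesis
      using close[of "real j / real n"] nodes[OF j]
      by (auto simp: abs_mult abs_minus_commute hat_nonneg intro!: mult_right_mono)
  qed (use hat_eq_0_if_far \<open>n > 0\<close> in auto)
  then have "\<bar>\<Sum>j\<le>n. (v j - \<psi> t) * hat n j t\<bar> \<le> (\<Sum>j\<le>n. e * hat n j t)"
    by (intro order.trans[OF sum_abs] sum_mono) auto
  moreover have "pl_interp n v t - \<psi> t = (\<Sum>j\<le>n. (v j - \<psi> t) * hat n j t)"
    using sum_hat[OF t, of n]
    by (simp add: pl_interp_def sum_subtractf left_diff_distrib flip: sum_distrib_left)
  ultimately show ?thesis
    using sum_hat[OF t, of n] by (simp flip: sum_distrib_left)
qed

definition C01_ball :: "real \<Rightarrow> (real \<Rightarrow> real) set" where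
  "C01_ball M = {\<phi>. continuous_on {0..1} \<phi> \<and> (\<forall>t\<in>{0..1}. \<bar>\<phi> t\<bar> \<le> M)}"

definition coord_box :: "real \<Rightarrow> (nat \<Rightarrow> real) set" where
  "coord_box M = {v. \<forall>j. \<bar>v j\<bar> \<le> M}"

lemma pl_interp_in_C01_ball: "v \<in> coord_box M \<Longrightarrow> pl_interp n v \<in> C01_ball M"
  by (auto simp: C01_ball_def coord_box_def intro!: pl_interp_bound continuous_intros)

text \<open>The discretised problem: a self-map of the \<open>n + 1\<close> node values, rescaled into the
  unit ball and clamped back into the box, has a Brouwer fixed point.\<close>

lemma pl_interp_fixpoint:
  fixes Phi :: "(real \<Rightarrow> real) \<Rightarrow> real \<Rightarrow> real"
  assumes "M > 0" and "n > 0"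
    and cont: "\<And>t. t \<in> {0..1} \<Longrightarrow> continuous_map (subtopology (powertop_real UNIV) (coord_box M))
                 euclideanreal (\<lambda>v. Phi (pl_interp n v) t)"
    and bound: "\<And>v t. v \<in> coord_box M \<Longrightarrow> t \<in> {0..1} \<Longrightarrow> \<bar>Phi (pl_interp n v) t\<bar> \<le> M"
  shows "\<exists>v\<in>coord_box M. \<forall>j\<le>n. v j = Phi (pl_interp n v) (real j / real n)"
proof -
  let ?P = "powertop_real UNIV"
  define c where "c = M * real (Suc n)"
  have "c > 0"
    using \<open>M > 0\<close> by (simp add: c_def)
  define clamp where "clamp = (\<lambda>x::nat \<Rightarrow> real. \<lambda>j. max (-M) (min M (c * x j)))"
  have clamp_box: "clamp x \<in> coord_box M" for x
    using \<open>M > 0\<close> by (auto simp: clamp_def coord_box_def)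
  define g where "g = (\<lambda>x i. if i \<le> n then Phi (pl_interp n (clamp x)) (real i / real n) / c else 0)"
  have node: "real i / real n \<in> {0..1}" if "i \<le> n" for i
    using that \<open>n > 0\<close> by (auto simp: field_simps)
  have "continuous_map (subtopology ?P (nball n)) (subtopology ?P (coord_box M)) clamp"
    unfolding continuous_map_in_subtopology continuous_map_componentwise_UNIV clamp_def
    using clamp_box by (auto simp: clamp_def intro!: continuous_intros
        continuous_map_from_subtopology continuous_map_product_projection)
  then have "continuous_map (subtopology ?P (nball n)) ?P g"
    unfolding continuous_map_componentwise_UNIV g_def
    using continuous_map_compose[OF _ cont[OF node]] \<open>c > 0\<close>
    by (auto simp: o_def intro!: continuous_intros)
  moreover have "g \<in> nball n \<rightarrow> nball n"
  proof
    fix x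
    have "\<bar>g x i\<bar> \<le> M / c" for i
      using bound[OF clamp_box[of x] node] \<open>c > 0\<close> \<open>M > 0\<close>
      by (auto simp: g_def abs_divide divide_right_mono)
    then have "(\<Sum>i\<le>n. (g x i)\<^sup>2) \<le> (\<Sum>i\<le>n. (M / c)\<^sup>2)"
      by (intro sum_mono) (metis abs_le_square_iff abs_of_pos \<open>c > 0\<close> \<open>M > 0\<close> divide_pos_pos)
    also have "\<dots> = 1 / real (Suc n)"
      using \<open>M > 0\<close> by (simp add: c_def power2_eq_square)
    finally show "g x \<in> nball n"
      by (auto simp: nball_def g_def order_trans)
  qed
  ultimately obtain x where "x \<in> nball n" "g x = x"
    using nball_fixpoint by blast
  show ?thesis
  proof (intro bexI allI impI)
    fix j assume "j \<le> n"
    then have cx: "c * x j = Phi (pl_interp n (clamp x)) (real j / real n)"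
      using fun_cong[OF \<open>g x = x\<close>, of j] \<open>c > 0\<close> by (auto simp: g_def field_simps)
    then have "\<bar>c * x j\<bar> \<le> M"
      using bound[OF clamp_box node[OF \<open>j \<le> n\<close>]] by simp
    then show "clamp x j = Phi (pl_interp n (clamp x)) (real j / real n)"
      using cx by (auto simp: clamp_def)
  qed (rule clamp_box)
qed

lemma approximate_fixpoints:
  fixes Phi :: "(real \<Rightarrow> real) \<Rightarrow> real \<Rightarrow> real"
  assumes "M > 0"
    and maps: "\<And>\<phi>. \<phi> \<in> C01_ball M \<Longrightarrow> Phi \<phi> \<in> C01_ball M"
    and equicont: "\<And>e. e > 0 \<Longrightarrow> \<exists>\<delta>>0. \<forall>\<phi>\<in>C01_ball M. \<forall>t\<in>{0..1}. \<forall>t'\<in>{0..1}.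
                     \<bar>t - t'\<bar> < \<delta> \<longrightarrow> \<bar>Phi \<phi> t - Phi \<phi> t'\<bar> < e"
    and fin_cont: "\<And>n t. t \<in> {0..1} \<Longrightarrow> continuous_map (subtopology (powertop_real UNIV) (coord_box M))
                     euclideanreal (\<lambda>v. Phi (pl_interp n v) t)"
  obtains \<phi>s where "\<And>m. \<phi>s m \<in> C01_ball M"
    and "uniform_limit {0..1} (\<lambda>m t. \<phi>s m t - Phi (\<phi>s m) t) (\<lambda>_. 0) sequentially"
proof -
  have "\<exists>v\<in>coord_box M. \<forall>j\<le>Suc m. v j = Phi (pl_interp (Suc m) v) (real j / real (Suc m))" for m
    using maps pl_interp_in_C01_ball
    by (intro pl_interp_fixpoint[OF \<open>M > 0\<close> _ fin_cont]) (auto simp: C01_ball_def)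
  then obtain V where V_box: "\<And>m. V m \<in> coord_box M"
    and V_nodes: "\<And>m j. j \<le> Suc m \<Longrightarrow> V m j = Phi (pl_interp (Suc m) (V m)) (real j / real (Suc m))"
    by metis
  show thesis
  proof (rule that)
    show "pl_interp (Suc m) (V m) \<in> C01_ball M" for m
      by (rule pl_interp_in_C01_ball[OF V_box])
    show "uniform_limit {0..1} (\<lambda>m t. pl_interp (Suc m) (V m) t - Phi (pl_interp (Suc m) (V m)) t)
        (\<lambda>_. 0) sequentially"
      unfolding uniform_limit_sequentially_iff dist_real_def
    proof (intro allI impI)
      fix e :: real assume "e > 0"
      then obtain \<delta> where "\<delta> > 0" and \<delta>: "\<forall>\<phi>\<in>C01_ball M. \<forall>t\<in>{0..1}. \<forall>t'\<in>{0..1}.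
          \<bar>t - t'\<bar> < \<delta> \<longrightarrow> \<bar>Phi \<phi> t - Phi \<phi> t'\<bar> < e / 2"
        using equicont[of "e / 2"] by auto
      obtain N where N: "inverse (real (Suc N)) < \<delta>"
        using reals_Archimedean[OF \<open>\<delta> > 0\<close>] by blast
      have "\<bar>pl_interp (Suc m) (V m) t - Phi (pl_interp (Suc m) (V m)) t\<bar> \<le> e / 2"
        if "m \<ge> N" "t \<in> {0..1}" for m t
      proof (rule pl_interp_approx[where \<psi> = "Phi (pl_interp (Suc m) (V m))",
            OF V_nodes _ \<open>t \<in> {0..1}\<close>])
        fix \<tau> assume "\<tau> \<in> {0..1}" "\<bar>\<tau> - t\<bar> < 1 / real (Suc m)"
        moreover have "1 / real (Suc m) \<le> inverse (real (Suc N))"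
          using \<open>m \<ge> N\<close> by (simp add: inverse_eq_divide frac_le)
        ultimately have "\<bar>\<tau> - t\<bar> < \<delta>"
          using N by linarith
        then show "\<bar>Phi (pl_interp (Suc m) (V m)) \<tau> - Phi (pl_interp (Suc m) (V m)) t\<bar> \<le> e / 2"
          using \<delta>[rule_format, OF pl_interp_in_C01_ball[OF V_box] \<open>\<tau> \<in> {0..1}\<close> \<open>t \<in> {0..1}\<close>]
          by (meson less_imp_le)
      qed auto
      then show "\<exists>N. \<forall>m\<ge>N. \<forall>t\<in>{0..1}.
          \<bar>pl_interp (Suc m) (V m) t - Phi (pl_interp (Suc m) (V m)) t - 0\<bar> < e"
        using \<open>e > 0\<close> by (intro exI[of _ N]) fastforce
    qed
  qed
qed

text \<open>Besides sequential continuity, the map has to be continuous on each space of piecewise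
  linear functions, so that Brouwer's theorem applies to the discretisations.\<close>

theorem C01_ball_fixpoint:
  fixes Phi :: "(real \<Rightarrow> real) \<Rightarrow> real \<Rightarrow> real"
  assumes "M > 0"
    and maps: "\<And>\<phi>. \<phi> \<in> C01_ball M \<Longrightarrow> Phi \<phi> \<in> C01_ball M"
    and equicont: "\<And>e. e > 0 \<Longrightarrow> \<exists>\<delta>>0. \<forall>\<phi>\<in>C01_ball M. \<forall>t\<in>{0..1}. \<forall>t'\<in>{0..1}.
                     \<bar>t - t'\<bar> < \<delta> \<longrightarrow> \<bar>Phi \<phi> t - Phi \<phi> t'\<bar> < e"
    and fin_cont: "\<And>n t. t \<in> {0..1} \<Longrightarrow> continuous_map (subtopology (powertop_real UNIV) (coord_box M))
                     euclideanreal (\<lambda>v. Phi (pl_interp n v) t)"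
    and seq_cont: "\<And>\<phi>s \<psi> t. (\<And>m. \<phi>s m \<in> C01_ball M) \<Longrightarrow> \<psi> \<in> C01_ball M \<Longrightarrow>
                     uniform_limit {0..1} \<phi>s \<psi> sequentially \<Longrightarrow> t \<in> {0..1} \<Longrightarrow>
                     (\<lambda>m. Phi (\<phi>s m) t) \<longlonglongrightarrow> Phi \<psi> t"
  obtains \<phi> where "\<phi> \<in> C01_ball M" and "\<And>t. t \<in> {0..1} \<Longrightarrow> Phi \<phi> t = \<phi> t"
proof -
  obtain \<phi>s where \<phi>s: "\<And>m. \<phi>s m \<in> C01_ball M"
    and approx: "uniform_limit {0..1} (\<lambda>m t. \<phi>s m t - Phi (\<phi>s m) t) (\<lambda>_. 0) sequentially"
    using approximate_fixpoints[OF \<open>M > 0\<close> maps equicont fin_cont] by blast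
  have \<psi>s: "Phi (\<phi>s m) \<in> C01_ball M" for m
    using maps[OF \<phi>s] .
  obtain g r where "continuous_on {0..1} g" and r: "strict_mono (r :: nat \<Rightarrow> nat)"
    and "\<And>e. 0 < e \<Longrightarrow> \<exists>N. \<forall>m t. m \<ge> N \<and> t \<in> {0..1} \<longrightarrow> norm (Phi (\<phi>s (r m)) t - g t) < e"
  proof (rule Arzela_Ascoli[of "{0..1}" "\<lambda>m. Phi (\<phi>s m)" M])
    show "norm (Phi (\<phi>s m) t) \<le> M" if "t \<in> {0..1}" for m t
      using \<psi>s that by (simp add: C01_ball_def)
    show "\<exists>d>0. \<forall>m t'. t' \<in> {0..1} \<and> norm (t - t') < d \<longrightarrow> norm (Phi (\<phi>s m) t - Phi (\<phi>s m) t') < e"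
      if "t \<in> {0..1}" "e > 0" for t e
      using equicont[OF \<open>e > 0\<close>] \<phi>s that by fastforce
  qed auto
  then have lim_\<psi>: "uniform_limit {0..1} (\<lambda>m. Phi (\<phi>s (r m))) g sequentially"
    unfolding uniform_limit_sequentially_iff dist_norm by (meson atLeastAtMost_iff)
  have "uniform_limit {0..1} (\<lambda>m t. (\<phi>s (r m) t - Phi (\<phi>s (r m)) t) + Phi (\<phi>s (r m)) t)
      (\<lambda>t. 0 + g t) sequentially"
    by (intro uniform_limit_add lim_\<psi> filterlim_compose[OF approx filterlim_subseq[OF r]])
  then have lim_\<phi>: "uniform_limit {0..1} (\<lambda>m. \<phi>s (r m)) g sequentially"
    by simp
  have "\<bar>g t\<bar> \<le> M" if "t \<in> {0..1}" for t
    using \<psi>s that by (intro tendsto_upperbound[OF tendsto_rabs[OF tendsto_uniform_limitI[OF lim_\<psi>]]])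
      (auto simp: C01_ball_def)
  with \<open>continuous_on {0..1} g\<close> have g: "g \<in> C01_ball M"
    by (simp add: C01_ball_def)
  show thesis
  proof (rule that[OF g])
    fix t :: real assume "t \<in> {0..1}"
    show "Phi g t = g t"
      using LIMSEQ_unique[OF seq_cont[OF \<phi>s g lim_\<phi> \<open>t \<in> {0..1}\<close>]
          tendsto_uniform_limitI[OF lim_\<psi> \<open>t \<in> {0..1}\<close>]] .
  qed
qed

section \<open>Integral operators\<close>

definition kernel_op :: "(real \<Rightarrow> real \<Rightarrow> real) \<Rightarrow> (real \<Rightarrow> real) \<Rightarrow> real \<Rightarrow> real" where
  "kernel_op k \<phi> t = integral {0..1} (\<lambda>s. k t s * \<phi> s)"

definition kernel_norm :: "(real \<Rightarrow> real \<Rightarrow> real) \<Rightarrow> real" where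
  "kernel_norm k = (SUP t\<in>{0..1}. integral {0..1} (\<lambda>s. \<bar>k t s\<bar>))"

definition integrable_kernel :: "(real \<Rightarrow> real \<Rightarrow> real) \<Rightarrow> bool" where
  "integrable_kernel k \<longleftrightarrow>
     (\<forall>t\<in>{0..1}. (\<forall>p. continuous_on {0..1} p \<longrightarrow> (\<lambda>s. k t s * p s) integrable_on {0..1}) \<and>
                 (\<lambda>s. \<bar>k t s\<bar>) integrable_on {0..1}) \<and>
     bdd_above ((\<lambda>t. integral {0..1} (\<lambda>s. \<bar>k t s\<bar>)) ` {0..1})"

lemma continuous_on_kernel_slice:
  assumes "continuous_on ({0..1} \<times> {0..1}) (\<lambda>(t, s). k t s)" and "t \<in> {0..1::real}"
  shows "continuous_on {0..1} (k t)"
proof -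
  have "continuous_on {0..1} ((\<lambda>(t, s). k t s) \<circ> Pair t)"
    using assms by (intro continuous_on_compose continuous_intros)
      (auto elim: continuous_on_subset)
  then show ?thesis
    by (simp add: o_def)
qed

lemma integrable_kernel_if_continuous:
  assumes cont: "continuous_on ({0..1} \<times> {0..1}) (\<lambda>(t, s). k t s)"
  shows "integrable_kernel k"
proof -
  obtain B where B: "\<And>t s. t \<in> {0..1} \<Longrightarrow> s \<in> {0..1} \<Longrightarrow> \<bar>k t s\<bar> \<le> B"
    using compact_imp_bounded[OF compact_continuous_image[OF cont
          compact_Times[OF compact_Icc compact_Icc]]]
    unfolding bounded_iff by fastforce
  have slice: "continuous_on {0..1} (k t)" if "t \<in> {0..1}" for t
    by (rule continuous_on_kernel_slice[OF cont that])
  have bound: "integral {0..1} (\<lambda>s. \<bar>k t s\<bar>) \<le> B" if "t \<in> {0..1}" for t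
    using integral_le[of "\<lambda>s. \<bar>k t s\<bar>" "{0..1}" "\<lambda>_. B"] B[OF that] slice[OF that]
    by (simp add: integrable_continuous_interval continuous_intros)
  show ?thesis
    unfolding integrable_kernel_def
    by (auto intro!: bdd_aboveI2[OF bound] integrable_continuous_interval continuous_intros slice)
qed

lemma integrable_on_01_piecewise:
  fixes p q :: "real \<Rightarrow> real"
  assumes "continuous_on {0..1} p" and "continuous_on {0..1} q" and "t \<in> {0..1}"
    and k: "\<And>s. s \<in> {0..1} \<Longrightarrow> s \<noteq> t \<Longrightarrow> k s = (if s < t then p s else q s)"
  shows "k integrable_on {0..1}"
proof (rule Henstock_Kurzweil_Integration.integrable_combine[of 0 t 1])
  have "p integrable_on {0..t}"
    using assms by (intro integrable_continuous_interval) (auto elim: continuous_on_subset)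
  then show "k integrable_on {0..t}"
    by (rule integrable_spike[where S = "{t}"]) (use k \<open>t \<in> {0..1}\<close> in auto)
  have "q integrable_on {t..1}"
    using assms by (intro integrable_continuous_interval) (auto elim: continuous_on_subset)
  then show "k integrable_on {t..1}"
    by (rule integrable_spike[where S = "{t}"]) (use k \<open>t \<in> {0..1}\<close> in auto)
qed (use \<open>t \<in> {0..1}\<close> in auto)

lemma integrable_kernel_if_piecewise:
  assumes a: "continuous_on {0..1} a" and b: "continuous_on {0..1} b"
    and k: "\<And>t s. t \<in> {0..1} \<Longrightarrow> s \<in> {0..1} \<Longrightarrow> s \<noteq> t \<Longrightarrow> k t s = (if s < t then a s else b s)"
  shows "integrable_kernel k"
proof -
  have abs_integrable: "(\<lambda>s. \<bar>k t s\<bar>) integrable_on {0..1}" if "t \<in> {0..1}" for t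
    using k[OF that] that by (intro integrable_on_01_piecewise[of "\<lambda>s. \<bar>a s\<bar>" "\<lambda>s. \<bar>b s\<bar>"])
      (auto intro: continuous_intros a b)
  have bound: "integral {0..1} (\<lambda>s. \<bar>k t s\<bar>) \<le> integral {0..1} (\<lambda>s. \<bar>a s\<bar> + \<bar>b s\<bar>)"
    if "t \<in> {0..1}" for t
  proof -
    have "integral {0..1} (\<lambda>s. \<bar>k t s\<bar>) = integral {0..1} (\<lambda>s. if s < t then \<bar>a s\<bar> else \<bar>b s\<bar>)"
      using k[OF that] by (intro integral_spike[of "{t}"]) auto
    also have "\<dots> \<le> integral {0..1} (\<lambda>s. \<bar>a s\<bar> + \<bar>b s\<bar>)"
    proof (rule integral_le)
      show "(\<lambda>s. if s < t then \<bar>a s\<bar> else \<bar>b s\<bar>) integrable_on {0..1}"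
        using that by (intro integrable_on_01_piecewise[of "\<lambda>s. \<bar>a s\<bar>" "\<lambda>s. \<bar>b s\<bar>" t])
          (auto intro: continuous_intros a b)
    qed (auto intro!: integrable_continuous_interval continuous_intros a b)
    finally show ?thesis .
  qed
  have "(\<lambda>s. k t s * p s) integrable_on {0..1}"
    if "t \<in> {0..1}" "continuous_on {0..1} p" for t p
    using k[OF that(1)] that
    by (intro integrable_on_01_piecewise[of "\<lambda>s. a s * p s" "\<lambda>s. b s * p s" t])
      (auto intro: continuous_intros a b)
  then show ?thesis
    unfolding integrable_kernel_def using abs_integrable by (auto intro!: bdd_aboveI2[OF bound])
qed

lemma kernel_op_bound:
  assumes k: "integrable_kernel k" and "t \<in> {0..1}" and "continuous_on {0..1} p"
    and p_bound: "\<And>s. s \<in> {0..1} \<Longrightarrow> \<bar>p s\<bar> \<le> B"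
  shows "\<bar>kernel_op k p t\<bar> \<le> kernel_norm k * B"
proof -
  have int: "(\<lambda>s. k t s * p s) integrable_on {0..1}" "(\<lambda>s. \<bar>k t s\<bar>) integrable_on {0..1}"
    and bdd: "bdd_above ((\<lambda>t. integral {0..1} (\<lambda>s. \<bar>k t s\<bar>)) ` {0..1})"
    using assms unfolding integrable_kernel_def by auto
  have "0 \<le> B"
    using p_bound[of 0] by auto
  have "norm (integral {0..1} (\<lambda>s. k t s * p s)) \<le> integral {0..1} (\<lambda>s. \<bar>k t s\<bar> * B)"
    using p_bound
    by (intro integral_norm_bound_integral[OF int(1) integrable_on_mult_left[OF int(2)]])
      (auto simp: abs_mult mult_left_mono)
  then have "\<bar>kernel_op k p t\<bar> \<le> integral {0..1} (\<lambda>s. \<bar>k t s\<bar> * B)"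
    by (simp add: kernel_op_def)
  also have "\<dots> = integral {0..1} (\<lambda>s. \<bar>k t s\<bar>) * B"
    by simp
  also have "\<dots> \<le> kernel_norm k * B"
    unfolding kernel_norm_def using \<open>t \<in> {0..1}\<close> bdd \<open>0 \<le> B\<close> by (intro mult_right_mono cSUP_upper)
  finally show ?thesis .
qed

lemma kernel_op_sum:
  assumes "integrable_kernel k" and "t \<in> {0..1}" and "finite J"
    and "\<And>j. j \<in> J \<Longrightarrow> continuous_on {0..1} (h j)"
  shows "kernel_op k (\<lambda>s. \<Sum>j\<in>J. v j * h j s) t = (\<Sum>j\<in>J. v j * kernel_op k (h j) t)"
proof -
  have "kernel_op k (\<lambda>s. \<Sum>j\<in>J. v j * h j s) t = integral {0..1} (\<lambda>s. \<Sum>j\<in>J. v j * (k t s * h j s))"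
    by (simp add: kernel_op_def sum_distrib_left algebra_simps)
  also have "\<dots> = (\<Sum>j\<in>J. v j * kernel_op k (h j) t)"
    using assms unfolding integrable_kernel_def kernel_op_def
    by (subst integral_sum) (auto intro: integrable_on_mult_right)
  finally show ?thesis .
qed

lemma kernel_op_tendsto:
  assumes k: "integrable_kernel k" and "t \<in> {0..1}"
    and cont: "\<And>m. continuous_on {0..1} (p m)" "continuous_on {0..1} q"
    and lim: "uniform_limit {0..1} p q sequentially"
  shows "(\<lambda>m. kernel_op k (p m) t) \<longlonglongrightarrow> kernel_op k q t"
proof (rule LIMSEQ_I)
  fix e :: real assume "e > 0"
  have "0 \<le> integral {0..1} (\<lambda>s. \<bar>k t s\<bar>)"
    using k \<open>t \<in> {0..1}\<close> by (intro integral_nonneg) (auto simp: integrable_kernel_def)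
  also have "\<dots> \<le> kernel_norm k"
    using k \<open>t \<in> {0..1}\<close> unfolding kernel_norm_def integrable_kernel_def
    by (intro cSUP_upper) auto
  finally have "0 \<le> kernel_norm k" .
  then have "e / (kernel_norm k + 1) > 0"
    using \<open>e > 0\<close> by simp
  then obtain N where N: "\<And>m s. m \<ge> N \<Longrightarrow> s \<in> {0..1} \<Longrightarrow> \<bar>p m s - q s\<bar> < e / (kernel_norm k + 1)"
    using lim unfolding uniform_limit_sequentially_iff dist_real_def by blast
  have "\<bar>kernel_op k (p m) t - kernel_op k q t\<bar> < e" if "m \<ge> N" for m
  proof -
    have "kernel_op k (p m) t - kernel_op k q t = kernel_op k (\<lambda>s. p m s - q s) t"
      using k \<open>t \<in> {0..1}\<close> cont integral_diff[of "\<lambda>s. k t s * p m s" "{0..1}" "\<lambda>s. k t s * q s"]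
      by (simp add: kernel_op_def integrable_kernel_def right_diff_distrib)
    also have "\<bar>\<dots>\<bar> \<le> kernel_norm k * (e / (kernel_norm k + 1))"
      using N[OF that] \<open>t \<in> {0..1}\<close>
      by (intro kernel_op_bound k continuous_intros cont less_imp_le) auto
    also have "\<dots> < e"
      using \<open>e > 0\<close> \<open>0 \<le> kernel_norm k\<close> by (simp add: field_simps)
    finally show ?thesis .
  qed
  then show "\<exists>N. \<forall>m\<ge>N. norm (kernel_op k (p m) t - kernel_op k q t) < e"
    by auto
qed

lemma continuous_on_01_eq_0_if_orthogonal:
  fixes \<psi> :: "real \<Rightarrow> real"
  assumes "continuous_on {0..1} \<psi>"
    and orth: "\<And>\<phi>. continuous_on {0..1} \<phi> \<Longrightarrow> integral {0..1} (\<lambda>s. \<psi> s * \<phi> s) = 0"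
    and "s \<in> {0..1}"
  shows "\<psi> s = 0"
proof -
  have "(\<lambda>s. \<psi> s * \<psi> s) integrable_on {0..1}"
    by (intro integrable_continuous_interval continuous_intros assms(1))
  then have "((\<lambda>s. \<psi> s * \<psi> s) has_integral 0) {0..1}"
    using orth[OF assms(1)] by (metis integrable_integral)
  then have "\<psi> s * \<psi> s = 0"
    using has_integral_0_cbox_imp_0[of 0 1 "\<lambda>s. \<psi> s * \<psi> s" s] assms(1) \<open>s \<in> {0..1}\<close>
    by (simp add: continuous_on_mult)
  then show ?thesis
    by simp
qed

section \<open>The equation \<open>u''' = \<phi>\<close> and its Green functions\<close>

text \<open>\<open>ramp2 (t - s)\<close> \<open>= (t - s)\<^sub>+\<^sup>2 / 2\<close> is the Green function of \<open>u''' = \<phi>\<close> with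
  \<open>u(0) = u'(0) = u''(0) = 0\<close>.\<close>

definition ramp2 :: "real \<Rightarrow> real" where
  "ramp2 x = (max 0 x)\<^sup>2 / 2"

lemma continuous_on_ramp2 [continuous_intros]:
  "continuous_on S f \<Longrightarrow> continuous_on S (\<lambda>x. ramp2 (f x))"
  unfolding ramp2_def by (intro continuous_intros) auto

definition third_order_sol ::
  "(real \<Rightarrow> real) \<Rightarrow> (real \<Rightarrow> real) \<Rightarrow> (real \<Rightarrow> real) \<Rightarrow> (real \<Rightarrow> real) \<Rightarrow> bool" where
  "third_order_sol \<phi> u u1 u2 \<longleftrightarrow>
     (\<forall>t\<in>{0..1}. (u has_real_derivative u1 t) (at t within {0..1})) \<and>
     (\<forall>t\<in>{0..1}. (u1 has_real_derivative u2 t) (at t within {0..1})) \<and>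
     continuous_on {0..1} u2 \<and>
     (\<forall>t\<in>{0<..<1}. (u2 has_real_derivative \<phi> t) (at t))"

lemma bvp_sol_iff:
  "bvp_sol a1 b1 c1 a2 b2 c2 a3 b3 c3 \<phi> u u1 u2 \<longleftrightarrow>
     third_order_sol \<phi> u u1 u2 \<and>
     a1 * u 0 + b1 * u1 0 + c1 * u2 0 = 0 \<and>
     a2 * u 0 + b2 * u1 0 + c2 * u2 0 = 0 \<and>
     a3 * u 1 + b3 * u1 1 + c3 * u2 1 = 0"
  by (auto simp: bvp_sol_def third_order_sol_def)

lemma third_order_sol_diff:
  assumes "third_order_sol \<phi> u u1 u2" and "third_order_sol \<phi> v v1 v2"
  shows "third_order_sol (\<lambda>_. 0) (\<lambda>t. u t - v t) (\<lambda>t. u1 t - v1 t) (\<lambda>t. u2 t - v2 t)"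
  using assms unfolding third_order_sol_def
  by (auto intro!: derivative_eq_intros continuous_intros)

lemma third_order_sol_zero_imp_quadratic:
  assumes "third_order_sol (\<lambda>_. 0) u u1 u2"
  obtains k0 k1 k2 where "\<And>t. t \<in> {0..1} \<Longrightarrow> u t = k0 + k1 * t + k2 * t\<^sup>2"
proof -
  have du: "\<And>t. t \<in> {0..1} \<Longrightarrow> (u has_real_derivative u1 t) (at t within {0..1})"
    and du1: "\<And>t. t \<in> {0..1} \<Longrightarrow> (u1 has_real_derivative u2 t) (at t within {0..1})"
    and "continuous_on {0..1} u2" and du2: "\<And>t. t \<in> {0<..<1} \<Longrightarrow> (u2 has_real_derivative 0) (at t)"
    using assms unfolding third_order_sol_def by auto
  define c2 where "c2 = u2 0"
  have u2: "u2 t = c2" if "t \<in> {0..1}" for t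
    using DERIV_isconst2[of 0 1 u2 t] \<open>continuous_on {0..1} u2\<close> du2 that by (auto simp: c2_def)
  have "\<exists>c1. \<forall>t\<in>{0..1}. u1 t - c2 * t = c1"
  proof (rule has_field_derivative_zero_constant)
    fix t :: real assume "t \<in> {0..1}"
    show "((\<lambda>t. u1 t - c2 * t) has_real_derivative 0) (at t within {0..1})"
      using u2[OF \<open>t \<in> {0..1}\<close>] by (auto intro!: derivative_eq_intros du1[OF \<open>t \<in> {0..1}\<close>])
  qed simp
  then obtain c1 where u1: "\<And>t. t \<in> {0..1} \<Longrightarrow> u1 t - c2 * t = c1"
    by blast
  have "\<exists>c0. \<forall>t\<in>{0..1}. u t - c1 * t - c2 / 2 * t\<^sup>2 = c0"
  proof (rule has_field_derivative_zero_constant)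
    fix t :: real assume "t \<in> {0..1}"
    show "((\<lambda>t. u t - c1 * t - c2 / 2 * t\<^sup>2) has_real_derivative 0) (at t within {0..1})"
      using u1[OF \<open>t \<in> {0..1}\<close>]
      by (auto intro!: derivative_eq_intros du[OF \<open>t \<in> {0..1}\<close>] simp: algebra_simps)
  qed simp
  then obtain c0 where u: "\<And>t. t \<in> {0..1} \<Longrightarrow> u t - c1 * t - c2 / 2 * t\<^sup>2 = c0"
    by blast
  show ?thesis
  proof (rule that)
    fix t :: real assume "t \<in> {0..1}"
    show "u t = c0 + c1 * t + c2 / 2 * t\<^sup>2"
      using u[OF \<open>t \<in> {0..1}\<close>] by linarith
  qed
qed

lemma integral_ramp2_mult:
  fixes \<phi> :: "real \<Rightarrow> real"
  assumes \<phi>: "continuous_on {0..1} \<phi>" and t: "t \<in> {0..1}"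
  shows "integral {0..1} (\<lambda>s. ramp2 (t - s) * \<phi> s) =
     t\<^sup>2 / 2 * integral {0..t} \<phi> - t * integral {0..t} (\<lambda>s. s * \<phi> s)
       + integral {0..t} (\<lambda>s. s\<^sup>2 * \<phi> s) / 2"
proof -
  let ?f = "\<lambda>s. ramp2 (t - s) * \<phi> s"
  have "continuous_on {0..t} \<phi>"
    using \<phi> t by (auto elim: continuous_on_subset)
  then have "((\<lambda>s. t\<^sup>2 / 2 * \<phi> s - t * (s * \<phi> s) + (s\<^sup>2 * \<phi> s) / 2) has_integral
      (t\<^sup>2 / 2 * integral {0..t} \<phi> - t * integral {0..t} (\<lambda>s. s * \<phi> s)
        + integral {0..t} (\<lambda>s. s\<^sup>2 * \<phi> s) / 2)) {0..t}"
    by (intro has_integral_add has_integral_diff has_integral_mult_right has_integral_divide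
        integrable_integral integrable_continuous_interval continuous_intros)
  moreover have "?f s = t\<^sup>2 / 2 * \<phi> s - t * (s * \<phi> s) + (s\<^sup>2 * \<phi> s) / 2" if "s \<in> {0..t}" for s
    using that by (simp add: ramp2_def power2_eq_square field_simps)
  ultimately have left: "integral {0..t} ?f = t\<^sup>2 / 2 * integral {0..t} \<phi>
      - t * integral {0..t} (\<lambda>s. s * \<phi> s) + integral {0..t} (\<lambda>s. s\<^sup>2 * \<phi> s) / 2"
    by (metis (no_types, lifting) has_integral_cong integral_unique)
  have right: "integral {t..1} ?f = 0"
    by (rule integral_unique, rule has_integral_is_0) (auto simp: ramp2_def)
  have "integral {0..t} ?f + integral {t..1} ?f = integral {0..1} ?f"
    using t \<phi> by (intro Henstock_Kurzweil_Integration.integral_combine integrable_continuous_interval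
        continuous_intros) auto
  then show ?thesis
    using left right by simp
qed

lemma third_order_sol_ramp2_integral:
  fixes \<phi> :: "real \<Rightarrow> real"
  assumes \<phi>: "continuous_on {0..1} \<phi>"
  shows "third_order_sol \<phi> (\<lambda>t. integral {0..1} (\<lambda>s. ramp2 (t - s) * \<phi> s))
           (\<lambda>t. t * integral {0..t} \<phi> - integral {0..t} (\<lambda>s. s * \<phi> s)) (\<lambda>t. integral {0..t} \<phi>)"
proof -
  define I0 where "I0 = (\<lambda>t. integral {0..t} \<phi>)"
  define I1 where "I1 = (\<lambda>t. integral {0..t} (\<lambda>s. s * \<phi> s))"
  define I2 where "I2 = (\<lambda>t. integral {0..t} (\<lambda>s. s\<^sup>2 * \<phi> s))"
  have dI0: "(I0 has_real_derivative \<phi> t) (at t within {0..1})" if "t \<in> {0..1}" for t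
    unfolding I0_def by (rule integral_has_real_derivative[OF \<phi> that])
  have dI1: "(I1 has_real_derivative t * \<phi> t) (at t within {0..1})" if "t \<in> {0..1}" for t
    unfolding I1_def by (rule integral_has_real_derivative[OF _ that]) (intro continuous_intros \<phi>)
  have dI2: "(I2 has_real_derivative t\<^sup>2 * \<phi> t) (at t within {0..1})" if "t \<in> {0..1}" for t
    unfolding I2_def by (rule integral_has_real_derivative[OF _ that]) (intro continuous_intros \<phi>)
  have dw: "((\<lambda>t. t\<^sup>2 / 2 * I0 t - t * I1 t + I2 t / 2) has_real_derivative t * I0 t - I1 t)
      (at t within {0..1})" if "t \<in> {0..1}" for t
    by (auto intro!: derivative_eq_intros dI0[OF that] dI1[OF that] dI2[OF that]
        simp: power2_eq_square algebra_simps)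
  have "((\<lambda>t. integral {0..1} (\<lambda>s. ramp2 (t - s) * \<phi> s)) has_real_derivative t * I0 t - I1 t)
      (at t within {0..1})" if "t \<in> {0..1}" for t
  proof (rule has_field_derivative_transform_within[OF dw[OF that] zero_less_one that])
    fix x :: real assume "x \<in> {0..1}"
    then show "x\<^sup>2 / 2 * I0 x - x * I1 x + I2 x / 2 = integral {0..1} (\<lambda>s. ramp2 (x - s) * \<phi> s)"
      by (simp add: integral_ramp2_mult[OF \<phi>] I0_def I1_def I2_def)
  qed
  moreover have "((\<lambda>t. t * I0 t - I1 t) has_real_derivative I0 t) (at t within {0..1})"
    if "t \<in> {0..1}" for t
    by (auto intro!: derivative_eq_intros dI0[OF that] dI1[OF that])
  moreover have "(I0 has_real_derivative \<phi> t) (at t)" if "t \<in> {0<..<1}" for t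
    using dI0[of t] that by (simp add: at_within_Icc_at)
  ultimately show ?thesis
    unfolding third_order_sol_def using DERIV_continuous_on[OF dI0]
    by (simp add: I0_def I1_def)
qed

lemma third_order_sol_eq_ramp2_integral_plus_quadratic:
  assumes "continuous_on {0..1} \<phi>" and "third_order_sol \<phi> u u1 u2"
  obtains k0 k1 k2 where
    "\<And>t. t \<in> {0..1} \<Longrightarrow> u t = integral {0..1} (\<lambda>s. ramp2 (t - s) * \<phi> s) + k0 + k1 * t + k2 * t\<^sup>2"
proof -
  obtain k0 k1 k2 where
    "\<And>t. t \<in> {0..1} \<Longrightarrow> u t - integral {0..1} (\<lambda>s. ramp2 (t - s) * \<phi> s) = k0 + k1 * t + k2 * t\<^sup>2"
    using third_order_sol_zero_imp_quadratic[OF third_order_sol_diff[OF assms(2)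
          third_order_sol_ramp2_integral[OF assms(1)]]] by blast
  then show ?thesis
    by (intro that) (simp add: algebra_simps)
qed

text \<open>The quadratic taking the values \<open>y0\<close>, \<open>yh\<close>, \<open>y1\<close> at \<open>0\<close>, \<open>1/2\<close>, \<open>1\<close>.\<close>

definition quad_interp :: "real \<Rightarrow> real \<Rightarrow> real \<Rightarrow> real \<Rightarrow> real" where
  "quad_interp y0 yh y1 t = (2 * t - 1) * (t - 1) * y0 + 4 * t * (1 - t) * yh + t * (2 * t - 1) * y1"

definition quad_interp_deriv :: "real \<Rightarrow> real \<Rightarrow> real \<Rightarrow> real \<Rightarrow> real" where
  "quad_interp_deriv y0 yh y1 t = (4 * t - 3) * y0 + (4 - 8 * t) * yh + (4 * t - 1) * y1"

lemma quad_interp_quadratic: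
  assumes "\<And>\<tau>. \<tau> \<in> {0, 1/2, 1} \<Longrightarrow> q \<tau> = k0 + k1 * \<tau> + k2 * \<tau>\<^sup>2"
  shows "quad_interp (q 0) (q (1/2)) (q 1) t = k0 + k1 * t + k2 * t\<^sup>2"
  using assms[of 0] assms[of "1/2"] assms[of 1]
  by (simp add: quad_interp_def power2_eq_square algebra_simps)

lemma has_real_derivative_quad_interp:
  "(quad_interp y0 yh y1 has_real_derivative quad_interp_deriv y0 yh y1 t) (at t)"
  unfolding quad_interp_def[abs_def] quad_interp_deriv_def
  by (rule derivative_eq_intros refl)+ (simp add: algebra_simps)

lemma has_real_derivative_quad_interp_deriv:
  "(quad_interp_deriv y0 yh y1 has_real_derivative 4 * y0 - 8 * yh + 4 * y1) (at t)"
  unfolding quad_interp_deriv_def[abs_def]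
  by (rule derivative_eq_intros refl)+ (simp add: algebra_simps)

lemma has_real_derivative_within_01_unique:
  assumes "t \<in> {0..1::real}"
    and "(f has_real_derivative a) (at t within {0..1})"
    and "(f has_real_derivative b) (at t within {0..1})"
  shows "a = b"
  using vector_derivative_unique_within_closed_interval[of 0 1 t f a b] assms
  by (simp add: has_real_derivative_iff_has_vector_derivative)

lemma has_real_derivative_ramp2:
  assumes "x \<noteq> 0"
  shows "(ramp2 has_real_derivative max 0 x) (at x)"
proof (cases "x > 0")
  case True
  have "((\<lambda>y. y\<^sup>2 / 2) has_real_derivative x) (at x)"
    by (auto intro!: derivative_eq_intros)
  then show ?thesis
    using True by (rule_tac has_field_derivative_transform_within_open[where S = "{0<..}"])
      (auto simp: ramp2_def)
next
  case False
  with assms have "x < 0"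
    by simp
  have "(ramp2 has_real_derivative 0) (at x)"
    by (rule has_field_derivative_transform_within_open[OF DERIV_const, where S = "{..<0}"])
      (use \<open>x < 0\<close> in \<open>auto simp: ramp2_def\<close>)
  with \<open>x < 0\<close> show ?thesis
    by simp
qed

lemma has_real_derivative_max0:
  assumes "x \<noteq> (0::real)"
  shows "((\<lambda>y. max 0 y) has_real_derivative (if x > 0 then 1 else 0)) (at x)"
proof (cases "x > 0")
  case True
  have "((\<lambda>y. max 0 y) has_real_derivative 1) (at x)"
    by (rule has_field_derivative_transform_within_open[OF DERIV_ident, where S = "{0<..}"])
      (use True in auto)
  with True show ?thesis
    by simp
next
  case False
  with assms have "x < 0"
    by simp
  have "((\<lambda>y. max 0 y) has_real_derivative 0) (at x)"
    by (rule has_field_derivative_transform_within_open[OF DERIV_const, where S = "{..<0}"])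
      (use \<open>x < 0\<close> in auto)
  with \<open>x < 0\<close> show ?thesis
    by simp
qed

text \<open>What remains of a Green function once the boundary conditions are forgotten.\<close>

definition green_kernels ::
  "(real \<Rightarrow> real \<Rightarrow> real) \<Rightarrow> (real \<Rightarrow> real \<Rightarrow> real) \<Rightarrow> (real \<Rightarrow> real \<Rightarrow> real) \<Rightarrow> bool" where
  "green_kernels G G1 G2 \<longleftrightarrow>
     continuous_on ({0..1} \<times> {0..1}) (\<lambda>(t, s). G t s) \<and>
     continuous_on ({0..1} \<times> {0..1}) (\<lambda>(t, s). G1 t s) \<and>
     (\<forall>s\<in>{0..1}. \<forall>t\<in>{0..1}. ((\<lambda>t. G t s) has_real_derivative G1 t s) (at t within {0..1})) \<and>
     (\<forall>s\<in>{0..1}. \<forall>t\<in>{0..1}. t \<noteq> s \<longrightarrow>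
        ((\<lambda>t. G1 t s) has_real_derivative G2 t s) (at t within {0..1})) \<and>
     (\<forall>\<phi>. continuous_on {0..1} \<phi> \<longrightarrow>
        third_order_sol \<phi> (kernel_op G \<phi>) (kernel_op G1 \<phi>) (kernel_op G2 \<phi>))"

lemma green_function_imp_green_kernels:
  "green_function a1 b1 c1 a2 b2 c2 a3 b3 c3 G G1 G2 \<Longrightarrow> green_kernels G G1 G2"
  unfolding green_function_def green_kernels_def bvp_sol_iff kernel_op_def[abs_def] by blast

definition green_defect :: "(real \<Rightarrow> real \<Rightarrow> real) \<Rightarrow> real \<Rightarrow> real \<Rightarrow> real" where
  "green_defect G \<tau> s = G \<tau> s - ramp2 (\<tau> - s)"

definition green_interp :: "(real \<Rightarrow> real \<Rightarrow> real) \<Rightarrow> real \<Rightarrow> real \<Rightarrow> real" where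
  "green_interp G t s = ramp2 (t - s)
     + quad_interp (green_defect G 0 s) (green_defect G (1/2) s) (green_defect G 1 s) t"

lemma continuous_on_green_defect:
  assumes "continuous_on ({0..1} \<times> {0..1}) (\<lambda>(t, s). G t s)" and "\<tau> \<in> {0..1}"
  shows "continuous_on {0..1} (green_defect G \<tau>)"
  unfolding green_defect_def[abs_def]
  by (intro continuous_intros continuous_on_kernel_slice[OF assms])

lemma continuous_on_green_interp:
  assumes "continuous_on ({0..1} \<times> {0..1}) (\<lambda>(t, s). G t s)"
  shows "continuous_on {0..1} (green_interp G t)"
  unfolding green_interp_def[abs_def] quad_interp_def
  by (intro continuous_intros continuous_on_green_defect[OF assms]) auto

lemma has_integral_green_defect:
  assumes "continuous_on ({0..1} \<times> {0..1}) (\<lambda>(t, s). G t s)" and "\<tau> \<in> {0..1}"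
    and \<phi>: "continuous_on {0..1} \<phi>"
  shows "((\<lambda>s. green_defect G \<tau> s * \<phi> s) has_integral
           (kernel_op G \<phi> \<tau> - integral {0..1} (\<lambda>s. ramp2 (\<tau> - s) * \<phi> s))) {0..1}"
proof -
  have "((\<lambda>s. G \<tau> s * \<phi> s - ramp2 (\<tau> - s) * \<phi> s) has_integral
      (kernel_op G \<phi> \<tau> - integral {0..1} (\<lambda>s. ramp2 (\<tau> - s) * \<phi> s))) {0..1}"
    unfolding kernel_op_def
    by (intro has_integral_diff integrable_integral integrable_continuous_interval continuous_intros
        \<phi> continuous_on_kernel_slice[OF assms(1,2)])
  then show ?thesis
    by (simp add: green_defect_def left_diff_distrib)
qed

text \<open>Every solution of \<open>u''' = \<phi>\<close> is \<open>\<integral> ramp2 (t - s) \<phi>(s) ds\<close> plus a quadratic, and a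
  quadratic is determined by its values at \<open>0\<close>, \<open>1/2\<close>, \<open>1\<close>.\<close>

lemma kernel_op_green_interp:
  assumes green: "green_kernels G G1 G2" and t: "t \<in> {0..1}" and \<phi>: "continuous_on {0..1} \<phi>"
  shows "kernel_op (green_interp G) \<phi> t = kernel_op G \<phi> t"
proof -
  define U where "U = kernel_op G \<phi>"
  define V where "V = (\<lambda>\<tau>. integral {0..1} (\<lambda>s. ramp2 (\<tau> - s) * \<phi> s))"
  have cont: "continuous_on ({0..1} \<times> {0..1}) (\<lambda>(t, s). G t s)"
    using green by (simp add: green_kernels_def)
  have "third_order_sol \<phi> U (kernel_op G1 \<phi>) (kernel_op G2 \<phi>)"
    using green \<phi> by (simp add: green_kernels_def U_def)
  then obtain k0 k1 k2 where k: "\<And>\<tau>. \<tau> \<in> {0..1} \<Longrightarrow> U \<tau> = V \<tau> + k0 + k1 * \<tau> + k2 * \<tau>\<^sup>2"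
    using third_order_sol_eq_ramp2_integral_plus_quadratic[OF \<phi>] unfolding V_def by blast
  have defect: "((\<lambda>s. green_defect G \<tau> s * \<phi> s) has_integral (U \<tau> - V \<tau>)) {0..1}"
    if "\<tau> \<in> {0..1}" for \<tau>
    unfolding U_def V_def by (rule has_integral_green_defect[OF cont that \<phi>])
  have ramp2_part: "((\<lambda>s. ramp2 (t - s) * \<phi> s) has_integral V t) {0..1}"
    unfolding V_def by (intro integrable_integral integrable_continuous_interval continuous_intros \<phi>)
  have "((\<lambda>s. ramp2 (t - s) * \<phi> s + ((2 * t - 1) * (t - 1) * (green_defect G 0 s * \<phi> s)
        + 4 * t * (1 - t) * (green_defect G (1/2) s * \<phi> s)
        + t * (2 * t - 1) * (green_defect G 1 s * \<phi> s)))
      has_integral (V t + quad_interp (U 0 - V 0) (U (1/2) - V (1/2)) (U 1 - V 1) t)) {0..1}"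
    unfolding quad_interp_def using ramp2_part
    by (intro has_integral_add has_integral_mult_right defect) auto
  moreover have "quad_interp (U 0 - V 0) (U (1/2) - V (1/2)) (U 1 - V 1) t = U t - V t"
  proof -
    have "U \<tau> - V \<tau> = k0 + k1 * \<tau> + k2 * \<tau>\<^sup>2" if "\<tau> \<in> {0, 1/2, 1}" for \<tau>
      using k[of \<tau>] that by auto
    from quad_interp_quadratic[of "\<lambda>\<tau>. U \<tau> - V \<tau>", OF this] show ?thesis
      using k[OF t] by simp
  qed
  moreover have "green_interp G t s * \<phi> s = ramp2 (t - s) * \<phi> s
      + ((2 * t - 1) * (t - 1) * (green_defect G 0 s * \<phi> s)
        + 4 * t * (1 - t) * (green_defect G (1/2) s * \<phi> s)
        + t * (2 * t - 1) * (green_defect G 1 s * \<phi> s))" for s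
    by (simp add: green_interp_def quad_interp_def distrib_right)
  ultimately have "((\<lambda>s. green_interp G t s * \<phi> s) has_integral U t) {0..1}"
    by simp
  then show ?thesis
    by (simp add: kernel_op_def integral_unique U_def)
qed

lemma green_kernel_eq:
  assumes green: "green_kernels G G1 G2" and t: "t \<in> {0..1}" and s: "s \<in> {0..1}"
  shows "G t s = green_interp G t s"
proof -
  have cont: "continuous_on ({0..1} \<times> {0..1}) (\<lambda>(t, s). G t s)"
    using green by (simp add: green_kernels_def)
  have "G t s - green_interp G t s = 0"
  proof (rule continuous_on_01_eq_0_if_orthogonal[OF _ _ s])
    show "continuous_on {0..1} (\<lambda>s. G t s - green_interp G t s)"
      by (intro continuous_intros continuous_on_kernel_slice[OF cont t]
          continuous_on_green_interp[OF cont])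
    fix \<phi> :: "real \<Rightarrow> real" assume \<phi>: "continuous_on {0..1} \<phi>"
    have "integral {0..1} (\<lambda>s. (G t s - green_interp G t s) * \<phi> s)
        = kernel_op G \<phi> t - kernel_op (green_interp G) \<phi> t"
      unfolding kernel_op_def left_diff_distrib
      by (intro integral_diff integrable_continuous_interval continuous_intros \<phi>
          continuous_on_green_interp[OF cont] continuous_on_kernel_slice[OF cont t])
    then show "integral {0..1} (\<lambda>s. (G t s - green_interp G t s) * \<phi> s) = 0"
      using kernel_op_green_interp[OF green t \<phi>] by simp
  qed
  then show ?thesis
    by simp
qed

lemma green_kernel1_eq:
  assumes green: "green_kernels G G1 G2" and t: "t \<in> {0..1}" and s: "s \<in> {0..1}" and "t \<noteq> s"
  shows "G1 t s = max 0 (t - s)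
           + quad_interp_deriv (green_defect G 0 s) (green_defect G (1/2) s) (green_defect G 1 s) t"
proof (rule has_real_derivative_within_01_unique[OF t])
  show "((\<lambda>\<tau>. G \<tau> s) has_real_derivative G1 t s) (at t within {0..1})"
    using green t s by (simp add: green_kernels_def)
  have "((\<lambda>\<tau>. ramp2 (\<tau> - s)) has_real_derivative max 0 (t - s)) (at t)"
    using DERIV_chain2[OF has_real_derivative_ramp2[of "t - s"] DERIV_diff[OF DERIV_ident DERIV_const]]
      \<open>t \<noteq> s\<close> by simp
  from DERIV_add[OF this has_real_derivative_quad_interp]
  show "((\<lambda>\<tau>. G \<tau> s) has_real_derivative max 0 (t - s)
           + quad_interp_deriv (green_defect G 0 s) (green_defect G (1/2) s) (green_defect G 1 s) t)
        (at t within {0..1})"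
    by (rule has_field_derivative_transform_within[OF has_field_derivative_at_within zero_less_one t])
      (simp add: green_kernel_eq[OF green _ s] green_interp_def)
qed

lemma green_kernel2_eq:
  assumes green: "green_kernels G G1 G2" and t: "t \<in> {0..1}" and s: "s \<in> {0..1}" and "t \<noteq> s"
  shows "G2 t s = (if s < t then 1 else 0)
           + (4 * green_defect G 0 s - 8 * green_defect G (1/2) s + 4 * green_defect G 1 s)"
proof (rule has_real_derivative_within_01_unique[OF t])
  show "((\<lambda>\<tau>. G1 \<tau> s) has_real_derivative G2 t s) (at t within {0..1})"
    using green t s \<open>t \<noteq> s\<close> by (simp add: green_kernels_def)
  have "((\<lambda>\<tau>. max 0 (\<tau> - s)) has_real_derivative (if s < t then 1 else 0)) (at t)"
    using DERIV_chain2[OF has_real_derivative_max0[of "t - s"] DERIV_diff[OF DERIV_ident DERIV_const]]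
      \<open>t \<noteq> s\<close> by simp
  from DERIV_add[OF this has_real_derivative_quad_interp_deriv]
  show "((\<lambda>\<tau>. G1 \<tau> s) has_real_derivative (if s < t then 1 else 0)
           + (4 * green_defect G 0 s - 8 * green_defect G (1/2) s + 4 * green_defect G 1 s))
        (at t within {0..1})"
  proof (rule has_field_derivative_transform_within[OF has_field_derivative_at_within _ t])
    show "0 < \<bar>t - s\<bar>"
      using \<open>t \<noteq> s\<close> by simp
    fix x assume "x \<in> {0..1}" "dist x t < \<bar>t - s\<bar>"
    then show "max 0 (x - s) + quad_interp_deriv (green_defect G 0 s) (green_defect G (1/2) s)
        (green_defect G 1 s) x = G1 x s"
      by (auto simp: green_kernel1_eq[OF green _ s] dist_real_def)
  qed
qed

lemma integrable_kernel_green2: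
  assumes green: "green_kernels G G1 G2"
  shows "integrable_kernel G2"
proof -
  define c where
    "c = (\<lambda>s. 4 * green_defect G 0 s - 8 * green_defect G (1/2) s + 4 * green_defect G 1 s)"
  have cont: "continuous_on ({0..1} \<times> {0..1}) (\<lambda>(t, s). G t s)"
    using green by (simp add: green_kernels_def)
  have "continuous_on {0..1} c"
    unfolding c_def by (intro continuous_intros continuous_on_green_defect[OF cont]) auto
  then show ?thesis
    using green_kernel2_eq[OF green]
    by (intro integrable_kernel_if_piecewise[of "\<lambda>s. 1 + c s" c])
      (auto intro: continuous_intros simp: c_def)
qed

section \<open>The fixed point problem\<close>

lemma lipschitz_on_01_if_deriv_bounded:
  fixes w w' :: "real \<Rightarrow> real"
  assumes cont: "continuous_on {0..1} w"
    and deriv: "\<And>x. x \<in> {0<..<1} \<Longrightarrow> (w has_real_derivative w' x) (at x)"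
    and bound: "\<And>x. x \<in> {0<..<1} \<Longrightarrow> \<bar>w' x\<bar> \<le> L"
  shows "L-lipschitz_on {0..1} w"
proof -
  have "L-lipschitz_on {0<..<1} w"
  proof (rule lipschitz_onI)
    show "0 \<le> L"
      using bound[of "1/2"] by simp
    fix x y :: real assume "x \<in> {0<..<1}" "y \<in> {0<..<1}"
    have "norm (w x - w y) \<le> L * norm (x - y)"
    proof (rule differentiable_bound[of "{0<..<1}" w "\<lambda>x. (*) (w' x)"])
      show "(w has_derivative (*) (w' z)) (at z within {0<..<1})" if "z \<in> {0<..<1}" for z
        using deriv[OF that]
        by (auto intro: has_field_derivative_imp_has_derivative has_derivative_at_withinI)
      show "onorm ((*) (w' z)) \<le> L" if "z \<in> {0<..<1}" for z
        using bound[OF that] by (intro onorm_le) (auto simp: abs_mult mult_right_mono)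
    qed (use \<open>x \<in> {0<..<1}\<close> \<open>y \<in> {0<..<1}\<close> in auto)
    then show "dist (w x) (w y) \<le> L * dist x y"
      by (simp add: dist_real_def)
  qed
  then show ?thesis
    using lipschitz_on_closure[of L "{0<..<1}" w] cont by simp
qed

lemma equicontinuous_compose_lipschitz:
  fixes F :: "'a::metric_space \<Rightarrow> 'b::metric_space" and g :: "'i \<Rightarrow> 'c::metric_space \<Rightarrow> 'a"
  assumes F: "uniformly_continuous_on D F"
    and lip: "\<And>i. i \<in> I \<Longrightarrow> L-lipschitz_on S (g i)"
    and maps: "\<And>i. i \<in> I \<Longrightarrow> g i ` S \<subseteq> D"
    and "e > 0"
  shows "\<exists>\<delta>>0. \<forall>i\<in>I. \<forall>t\<in>S. \<forall>t'\<in>S. dist t t' < \<delta> \<longrightarrow> dist (F (g i t)) (F (g i t')) < e"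
proof -
  obtain d where "d > 0" and d: "\<And>x x'. x \<in> D \<Longrightarrow> x' \<in> D \<Longrightarrow> dist x' x < d \<Longrightarrow> dist (F x') (F x) < e"
    using F \<open>e > 0\<close> unfolding uniformly_continuous_on_def by metis
  show ?thesis
  proof (intro exI conjI ballI impI)
    show "d / (\<bar>L\<bar> + 1) > 0"
      using \<open>d > 0\<close> by simp
    fix i t t' assume "i \<in> I" "t \<in> S" "t' \<in> S" and close: "dist t t' < d / (\<bar>L\<bar> + 1)"
    have "dist (g i t) (g i t') \<le> \<bar>L\<bar> * dist t t'"
      using lipschitz_onD[OF lip[OF \<open>i \<in> I\<close>] \<open>t \<in> S\<close> \<open>t' \<in> S\<close>]
      by (meson abs_ge_self mult_right_mono order.trans zero_le_dist)
    also have "\<dots> \<le> (\<bar>L\<bar> + 1) * dist t t'"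
      by (simp add: mult_right_mono)
    also have "\<dots> < d"
      using close by (simp add: field_simps add_pos_nonneg)
    finally show "dist (F (g i t)) (F (g i t')) < e"
      using d maps[OF \<open>i \<in> I\<close>] \<open>t \<in> S\<close> \<open>t' \<in> S\<close> by (auto simp: dist_commute)
  qed
qed

locale third_order_fixpoint =
  fixes G G1 G2 :: "real \<Rightarrow> real \<Rightarrow> real"
    and f :: "real \<Rightarrow> real \<Rightarrow> real \<Rightarrow> real \<Rightarrow> real"
    and M :: real
    and D :: "(real \<times> real \<times> real \<times> real) set"
  defines "D \<equiv> {(t, x, y, z). 0 \<le> t \<and> t \<le> 1 \<and> \<bar>x\<bar> \<le> kernel_norm G * M \<and>
                  \<bar>y\<bar> \<le> kernel_norm G1 * M \<and> \<bar>z\<bar> \<le> kernel_norm G2 * M}"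
  assumes kernels: "green_kernels G G1 G2"
    and M_pos: "M > 0"
    and f_cont: "continuous_on D (\<lambda>(t, x, y, z). f t x y z)"
    and f_bound: "\<And>t x y z. (t, x, y, z) \<in> D \<Longrightarrow> \<bar>f t x y z\<bar> \<le> M"
begin

definition nonlinear_op :: "(real \<Rightarrow> real) \<Rightarrow> real \<Rightarrow> real" where
  "nonlinear_op \<phi> t = f t (kernel_op G \<phi> t) (kernel_op G1 \<phi> t) (kernel_op G2 \<phi> t)"

lemma integrable_kernels: "integrable_kernel G" "integrable_kernel G1" "integrable_kernel G2"
  using kernels integrable_kernel_green2[OF kernels]
  by (auto simp: green_kernels_def intro: integrable_kernel_if_continuous)

lemma kernel_ops_solve:
  "continuous_on {0..1} \<phi> \<Longrightarrow> third_order_sol \<phi> (kernel_op G \<phi>) (kernel_op G1 \<phi>) (kernel_op G2 \<phi>)"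
  using kernels by (simp add: green_kernels_def)

lemma kernel_ops_in_D:
  assumes "\<phi> \<in> C01_ball M" and "t \<in> {0..1}"
  shows "(t, kernel_op G \<phi> t, kernel_op G1 \<phi> t, kernel_op G2 \<phi> t) \<in> D"
  using assms kernel_op_bound[OF integrable_kernels(1)] kernel_op_bound[OF integrable_kernels(2)]
    kernel_op_bound[OF integrable_kernels(3)]
  by (auto simp: D_def C01_ball_def)

lemma continuous_on_kernel_ops:
  assumes "continuous_on {0..1} \<phi>"
  shows "continuous_on {0..1} (kernel_op G \<phi>)" "continuous_on {0..1} (kernel_op G1 \<phi>)"
    "continuous_on {0..1} (kernel_op G2 \<phi>)"
  using kernel_ops_solve[OF assms] DERIV_continuous_on[of "{0..1}" "kernel_op G \<phi>" "kernel_op G1 \<phi>"]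
    DERIV_continuous_on[of "{0..1}" "kernel_op G1 \<phi>" "kernel_op G2 \<phi>"]
  by (auto simp: third_order_sol_def)

lemma nonlinear_op_in_C01_ball:
  assumes "\<phi> \<in> C01_ball M"
  shows "nonlinear_op \<phi> \<in> C01_ball M"
proof -
  have "continuous_on {0..1} (\<lambda>t. (\<lambda>(t, x, y, z). f t x y z)
      (t, kernel_op G \<phi> t, kernel_op G1 \<phi> t, kernel_op G2 \<phi> t))"
    using kernel_ops_in_D[OF assms] continuous_on_kernel_ops assms
    by (intro continuous_on_compose2[OF f_cont] continuous_intros) (auto simp: C01_ball_def)
  then show ?thesis
    using f_bound kernel_ops_in_D[OF assms] by (simp add: C01_ball_def nonlinear_op_def)
qed

lemma lipschitz_on_kernel_ops:
  assumes "\<phi> \<in> C01_ball M"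
  shows "(kernel_norm G1 * M)-lipschitz_on {0..1} (kernel_op G \<phi>)"
    and "(kernel_norm G2 * M)-lipschitz_on {0..1} (kernel_op G1 \<phi>)"
    and "M-lipschitz_on {0..1} (kernel_op G2 \<phi>)"
proof -
  have \<phi>: "continuous_on {0..1} \<phi>" "\<And>t. t \<in> {0..1} \<Longrightarrow> \<bar>\<phi> t\<bar> \<le> M"
    using assms by (auto simp: C01_ball_def)
  have d0: "(kernel_op G \<phi> has_real_derivative kernel_op G1 \<phi> t) (at t)"
    and d1: "(kernel_op G1 \<phi> has_real_derivative kernel_op G2 \<phi> t) (at t)"
    and d2: "(kernel_op G2 \<phi> has_real_derivative \<phi> t) (at t)" if "t \<in> {0<..<1}" for t
    using kernel_ops_solve[OF \<phi>(1)] that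
    by (auto simp: third_order_sol_def at_within_Icc_at[symmetric])
  have "\<bar>kernel_op G1 \<phi> t\<bar> \<le> kernel_norm G1 * M" "\<bar>kernel_op G2 \<phi> t\<bar> \<le> kernel_norm G2 * M"
    if "t \<in> {0<..<1}" for t
    using kernel_ops_in_D[OF assms] that by (auto simp: D_def)
  then show "(kernel_norm G1 * M)-lipschitz_on {0..1} (kernel_op G \<phi>)"
    and "(kernel_norm G2 * M)-lipschitz_on {0..1} (kernel_op G1 \<phi>)"
    and "M-lipschitz_on {0..1} (kernel_op G2 \<phi>)"
    using \<phi> by (auto intro!: lipschitz_on_01_if_deriv_bounded continuous_on_kernel_ops d0 d1 d2)
qed

lemma compact_D: "compact D"
proof -
  have "D = {0..1} \<times> {-(kernel_norm G * M)..kernel_norm G * M} \<times>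
      {-(kernel_norm G1 * M)..kernel_norm G1 * M} \<times> {-(kernel_norm G2 * M)..kernel_norm G2 * M}"
    by (auto simp: D_def abs_le_iff)
  then show ?thesis
    by (simp add: compact_Times)
qed

lemma nonlinear_op_equicontinuous:
  assumes "e > 0"
  shows "\<exists>\<delta>>0. \<forall>\<phi>\<in>C01_ball M. \<forall>t\<in>{0..1}. \<forall>t'\<in>{0..1}.
           \<bar>t - t'\<bar> < \<delta> \<longrightarrow> \<bar>nonlinear_op \<phi> t - nonlinear_op \<phi> t'\<bar> < e"
proof -
  define L where "L = sqrt (1\<^sup>2 + (sqrt ((kernel_norm G1 * M)\<^sup>2
    + (sqrt ((kernel_norm G2 * M)\<^sup>2 + M\<^sup>2))\<^sup>2))\<^sup>2)"
  have "L-lipschitz_on {0..1} (\<lambda>t. (t, kernel_op G \<phi> t, kernel_op G1 \<phi> t, kernel_op G2 \<phi> t))"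
    if "\<phi> \<in> C01_ball M" for \<phi>
    unfolding L_def by (intro lipschitz_on_Pair lipschitz_on_id lipschitz_on_kernel_ops[OF that])
  moreover have "(\<lambda>t. (t, kernel_op G \<phi> t, kernel_op G1 \<phi> t, kernel_op G2 \<phi> t)) ` {0..1} \<subseteq> D"
    if "\<phi> \<in> C01_ball M" for \<phi>
    using kernel_ops_in_D[OF that] by auto
  ultimately show ?thesis
    using equicontinuous_compose_lipschitz[OF compact_uniformly_continuous[OF f_cont compact_D] _ _ assms,
        of "C01_ball M" L "{0..1}" "\<lambda>\<phi> t. (t, kernel_op G \<phi> t, kernel_op G1 \<phi> t, kernel_op G2 \<phi> t)"]
    by (simp add: nonlinear_op_def dist_real_def)
qed

lemma nonlinear_op_pl_interp_continuous:
  assumes "t \<in> {0..1}"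
  shows "continuous_map (subtopology (powertop_real UNIV) (coord_box M)) euclideanreal
           (\<lambda>v. nonlinear_op (pl_interp n v) t)"
proof -
  let ?X = "subtopology (powertop_real UNIV) (coord_box M)"
  have linear: "kernel_op k (pl_interp n v) t = (\<Sum>j\<le>n. v j * kernel_op k (hat n j) t)"
    if "integrable_kernel k" for k v
    unfolding pl_interp_def[abs_def]
    by (rule kernel_op_sum[OF that assms]) (auto intro: continuous_intros)
  have cont_sum: "continuous_map ?X euclideanreal (\<lambda>v. \<Sum>j\<le>n. v j * c j)" for c :: "nat \<Rightarrow> real"
    by (intro continuous_map_sum continuous_map_real_mult_right
        continuous_map_from_subtopology continuous_map_product_projection) auto
  have "continuous_map ?X (prod_topology euclideanreal (prod_topology euclideanreal
      (prod_topology euclideanreal euclideanreal))) (\<lambda>v. (t, \<Sum>j\<le>n. v j * kernel_op G (hat n j) t,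
      \<Sum>j\<le>n. v j * kernel_op G1 (hat n j) t, \<Sum>j\<le>n. v j * kernel_op G2 (hat n j) t))"
    by (intro continuous_map_pairedI cont_sum continuous_map_const[THEN iffD2]) simp
  then have "continuous_map ?X euclidean (\<lambda>v. (t, kernel_op G (pl_interp n v) t,
      kernel_op G1 (pl_interp n v) t, kernel_op G2 (pl_interp n v) t))"
    by (simp add: linear integrable_kernels)
  moreover have "(t, kernel_op G (pl_interp n v) t, kernel_op G1 (pl_interp n v) t,
      kernel_op G2 (pl_interp n v) t) \<in> D" if "v \<in> coord_box M" for v
    by (rule kernel_ops_in_D[OF pl_interp_in_C01_ball[OF that] assms])
  ultimately have "continuous_map ?X (top_of_set D) (\<lambda>v. (t, kernel_op G (pl_interp n v) t,
      kernel_op G1 (pl_interp n v) t, kernel_op G2 (pl_interp n v) t))"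
    by (auto simp: continuous_map_in_subtopology)
  from continuous_map_compose[OF this, of euclideanreal "\<lambda>(t, x, y, z). f t x y z"]
  show ?thesis
    using f_cont by (simp add: o_def nonlinear_op_def)
qed

lemma nonlinear_op_tendsto:
  assumes \<phi>s: "\<And>m. \<phi>s m \<in> C01_ball M" and \<psi>: "\<psi> \<in> C01_ball M"
    and lim: "uniform_limit {0..1} \<phi>s \<psi> sequentially" and "t \<in> {0..1}"
  shows "(\<lambda>m. nonlinear_op (\<phi>s m) t) \<longlonglongrightarrow> nonlinear_op \<psi> t"
proof -
  have cont: "\<And>m. continuous_on {0..1} (\<phi>s m)" "continuous_on {0..1} \<psi>"
    using \<phi>s \<psi> by (auto simp: C01_ball_def)
  have "(\<lambda>m. (t, kernel_op G (\<phi>s m) t, kernel_op G1 (\<phi>s m) t, kernel_op G2 (\<phi>s m) t))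
      \<longlonglongrightarrow> (t, kernel_op G \<psi> t, kernel_op G1 \<psi> t, kernel_op G2 \<psi> t)"
    using kernel_op_tendsto[OF _ \<open>t \<in> {0..1}\<close> cont lim] integrable_kernels
    by (intro tendsto_intros) auto
  from continuous_on_tendsto_compose[OF f_cont this kernel_ops_in_D[OF \<psi> \<open>t \<in> {0..1}\<close>]]
  show ?thesis
    using kernel_ops_in_D[OF \<phi>s \<open>t \<in> {0..1}\<close>] by (simp add: nonlinear_op_def)
qed

lemma nonlinear_op_fixpoint:
  obtains \<phi> where "\<phi> \<in> C01_ball M" and "\<And>t. t \<in> {0..1} \<Longrightarrow> nonlinear_op \<phi> t = \<phi> t"
  using C01_ball_fixpoint[OF M_pos nonlinear_op_in_C01_ball nonlinear_op_equicontinuous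
      nonlinear_op_pl_interp_continuous nonlinear_op_tendsto] by blast

end

theorem theorem1:
  fixes a1 b1 c1 a2 b2 c2 a3 b3 c3 :: real
    and G G1 G2 :: "real \<Rightarrow> real \<Rightarrow> real"
    and f :: "real \<Rightarrow> real \<Rightarrow> real \<Rightarrow> real \<Rightarrow> real"
    and M0 M1 M2 M :: real
  assumes rank: "rank (bc_matrix a1 b1 c1 a2 b2 c2 a3 b3 c3) = 3"
    and green: "green_function a1 b1 c1 a2 b2 c2 a3 b3 c3 G G1 G2"
    and M0_def: "M0 = (SUP t\<in>{0..1}. integral {0..1} (\<lambda>s. \<bar>G t s\<bar>))"
    and M1_def: "M1 = (SUP t\<in>{0..1}. integral {0..1} (\<lambda>s. \<bar>G1 t s\<bar>))"
    and M2_def: "M2 = (SUP t\<in>{0..1}. integral {0..1} (\<lambda>s. \<bar>G2 t s\<bar>))"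
    and Mpos: "M > 0"
    and fcont: "continuous_on {(t,x,y,z). 0 \<le> t \<and> t \<le> 1 \<and> \<bar>x\<bar> \<le> M0 * M \<and> \<bar>y\<bar> \<le> M1 * M \<and> \<bar>z\<bar> \<le> M2 * M}
                  (\<lambda>(t,x,y,z). f t x y z)"
    and fbound: "\<And>t x y z. 0 \<le> t \<Longrightarrow> t \<le> 1 \<Longrightarrow> \<bar>x\<bar> \<le> M0 * M \<Longrightarrow> \<bar>y\<bar> \<le> M1 * M \<Longrightarrow>
                   \<bar>z\<bar> \<le> M2 * M \<Longrightarrow> \<bar>f t x y z\<bar> \<le> M"
  shows "\<exists>u u1 u2.
           bvp_sol a1 b1 c1 a2 b2 c2 a3 b3 c3 (\<lambda>t. f t (u t) (u1 t) (u2 t)) u u1 u2 \<and>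
           (\<forall>t\<in>{0..1}. \<bar>u t\<bar> \<le> M0 * M \<and> \<bar>u1 t\<bar> \<le> M1 * M \<and> \<bar>u2 t\<bar> \<le> M2 * M)"
proof -
  interpret third_order_fixpoint G G1 G2 f M
    "{(t, x, y, z). 0 \<le> t \<and> t \<le> 1 \<and> \<bar>x\<bar> \<le> M0 * M \<and> \<bar>y\<bar> \<le> M1 * M \<and> \<bar>z\<bar> \<le> M2 * M}"
    using green_function_imp_green_kernels[OF green] Mpos fcont fbound
    by unfold_locales (auto simp: M0_def M1_def M2_def kernel_norm_def)
  obtain \<phi> where \<phi>: "\<phi> \<in> C01_ball M" and fixed: "\<And>t. t \<in> {0..1} \<Longrightarrow> nonlinear_op \<phi> t = \<phi> t"
    using nonlinear_op_fixpoint by blast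
  have "bvp_sol a1 b1 c1 a2 b2 c2 a3 b3 c3 \<phi> (kernel_op G \<phi>) (kernel_op G1 \<phi>) (kernel_op G2 \<phi>)"
    using green \<phi> by (simp add: green_function_def C01_ball_def kernel_op_def[abs_def])
  then have "bvp_sol a1 b1 c1 a2 b2 c2 a3 b3 c3
      (\<lambda>t. f t (kernel_op G \<phi> t) (kernel_op G1 \<phi> t) (kernel_op G2 \<phi> t))
      (kernel_op G \<phi>) (kernel_op G1 \<phi>) (kernel_op G2 \<phi>)"

    using fixed by (simp add: bvp_sol_def nonlinear_op_def)
  then show ?thesis
    using kernel_ops_in_D[OF \<phi>] by blast
qed

end
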